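(* Let $S,T\in\mathbb P$ with $\deg(S)=n$, $\deg(T)=m$, and let $0\le k\le n-m$. Then $$\sum_{U\in\mathbb P,\ \deg(U)=m+k}(S/U)(U/T)=(S/T)\binom{n-m}{k}.$$ Consequently, for all $a,b\in\mathbb C$, $$\sum_{U\in\mathbb P}(S/U)(U/T)\,a^{\,n-\deg(U)}(b-a)^{\deg(U)-m}=(S/T)\,b^{\,n-m}.$$
   Context: Let $\mathbb P$ denote the set of finite planar reduced rooted trees (rooted trees in which the children of each vertex are linearly ordered and no vertex has exactly one child), including the empty tree $\mathbf 1$ and the one-vertex tree $|$. For $T\in\mathbb P$, $\deg(T)$ is the number of leaves and $L(T)$ its set of leaves. For $S\in\mathbb P$ and $I\subseteq L(S)$, the contraction $S|I\in\mathbb P$ is obtained from the subtree of $S$ consisting of all vertices on paths from the root to leaves in $I$ (with induced planar order) by suppressing every vertex having exactly one child ($S|\emptyset=\mathbf 1$, $S|I=|$ if $\#I=1$). The planar binomial coefficient is $(S/T)=\#\{I\subseteq L(S):S|I=T\}$ (zero unless $\deg T\le\deg S$). *)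

theory Defs
  imports Complex_Main
begin

text \<open>Planar rooted trees: a vertex is the ordered list of its children.  Leaves are numbered 0,1,... from
  left to right.  The empty tree is represented by None, every nonempty tree
  t by Some t.\<close>

datatype ptree = Nd "ptree list"

fun reduced :: "ptree \<Rightarrow> bool" where
  "reduced (Nd ts) = (length ts \<noteq> 1 \<and> (\<forall>t\<in>set ts. reduced t))"

fun leaves :: "ptree \<Rightarrow> nat" where
  "leaves (Nd ts) = (if ts = [] then 1 else sum_list (map leaves ts))"

definition PP :: "ptree option set" where
  "PP = {None} \<union> Some ` {t. reduced t}"

definition deg :: "ptree option \<Rightarrow> nat" where
  "deg U = (case U of None \<Rightarrow> 0 | Some t \<Rightarrow> leaves t)"

text \<open>Contraction to a set I of leaf indices: keep the vertices lying on paths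
  from the root to leaves in I and suppress vertices with exactly one child.
  The result None means the empty tree.\<close>
fun contr :: "ptree \<Rightarrow> nat set \<Rightarrow> ptree option"
and contrs :: "ptree list \<Rightarrow> nat set \<Rightarrow> ptree list" where
  "contr (Nd ts) I =
     (if ts = [] then (if 0 \<in> I then Some (Nd []) else None)
      else (case contrs ts I of [] \<Rightarrow> None | [c] \<Rightarrow> Some c | cs \<Rightarrow> Some (Nd cs)))"
| "contrs [] I = []"
| "contrs (t # ts) I =
     (case contr t I of None \<Rightarrow> [] | Some c \<Rightarrow> [c]) @ contrs ts {i. i + leaves t \<in> I}"

definition contract :: "ptree option \<Rightarrow> nat set \<Rightarrow> ptree option" where
  "contract S I = (case S of None \<Rightarrow> None | Some t \<Rightarrow> contr t I)"

definition pbinom :: "ptree option \<Rightarrow> ptree option \<Rightarrow> nat" where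
  "pbinom S T = card {I. I \<subseteq> {..<deg S} \<and> contract S I = T}"

end

theory Submission
  imports Defs
begin

text \<open>Contraction is functorial: \<open>S|I\<close> has \<open>#I\<close> leaves, and contracting \<open>S|I\<close> to a set
  \<open>J\<close> of its leaves is contracting \<open>S\<close> to the elements of \<open>I\<close> whose rank in \<open>I\<close> lies in \<open>J\<close>.
  Hence, for \<open>n = deg S\<close> and \<open>m = deg T\<close>, the sum of \<open>(S/U)(U/T)\<close> over \<open>deg U = m + k\<close>
  counts the pairs \<open>K \<subseteq> I \<subseteq> L(S)\<close> with \<open>#I = m + k\<close> and \<open>S|K = T\<close>, and each of the
  \<open>(S/T)\<close> sets \<open>K\<close> lies in exactly \<open>(n - m choose k)\<close> such \<open>I\<close>.  Since \<open>(U/T) = 0\<close> for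
  \<open>deg U < m\<close>, the second identity is then the binomial expansion of \<open>((b - a) + a)^(n - m)\<close>.\<close>

definition shift :: "nat set \<Rightarrow> nat \<Rightarrow> nat set" where
  "shift I a = {i. i + a \<in> I}"

definition rank :: "nat set \<Rightarrow> nat \<Rightarrow> nat" where
  "rank I x = card {y\<in>I. y < x}"

text \<open>Leaf \<open>j\<close> of \<open>S|I\<close> is the element of \<open>I\<close> of rank \<open>j\<close>.\<close>

definition select_ranks :: "nat set \<Rightarrow> nat set \<Rightarrow> nat set" where
  "select_ranks I J = {x\<in>I. rank I x \<in> J}"

definition list_of_opt :: "ptree option \<Rightarrow> ptree list" where
  "list_of_opt x = (case x of None \<Rightarrow> [] | Some c \<Rightarrow> [c])"

fun tree_of_forest :: "ptree list \<Rightarrow> ptree option" where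
  "tree_of_forest [] = None"
| "tree_of_forest [c] = Some c"
| "tree_of_forest cs = Some (Nd cs)"

lemma deg_None [simp]: "deg None = 0"
  and deg_Some [simp]: "deg (Some t) = leaves t"
  by (simp_all add: deg_def)

lemma contr_Nd: "ts \<noteq> [] \<Longrightarrow> contr (Nd ts) I = tree_of_forest (contrs ts I)"
  by (cases "contrs ts I" rule: tree_of_forest.cases) auto

lemma contrs_Cons_shift:
  "contrs (t # ts) I = list_of_opt (contr t I) @ contrs ts (shift I (leaves t))"
  by (simp add: shift_def list_of_opt_def split: option.split)

lemma contrs_list_of_opt: "contrs (list_of_opt x) J = list_of_opt (contract x J)"
  by (cases x) (auto simp: list_of_opt_def contract_def shift_def split: option.split)

lemma contract_tree_of_forest: "contract (tree_of_forest cs) J = tree_of_forest (contrs cs J)"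
proof (cases cs rule: tree_of_forest.cases)
  case (2 c)
  then show ?thesis by (cases "contr c J") (auto simp: contract_def)
qed (auto simp: contract_def contr_Nd simp del: contr.simps)

lemma shift_shift: "shift (shift J a) b = shift J (a + b)"
  by (auto simp: shift_def ac_simps)

lemma contrs_append:
  "contrs (xs @ ys) J = contrs xs J @ contrs ys (shift J (sum_list (map leaves xs)))"
  by (induction xs arbitrary: J)
    (simp add: shift_def, simp add: contrs_Cons_shift shift_shift del: contrs.simps)

lemma deg_tree_of_forest: "deg (tree_of_forest cs) = sum_list (map leaves cs)"
  by (cases cs rule: tree_of_forest.cases) auto

lemma sum_leaves_list_of_opt: "sum_list (map leaves (list_of_opt x)) = deg x"
  by (cases x) (auto simp: list_of_opt_def)

lemma card_less_add_split:
  fixes I :: "nat set"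
  shows "card {i\<in>I. i < a + s} = card {i\<in>I. i < a} + card {i\<in>shift I a. i < s}"
proof -
  have split: "{i\<in>I. i < a + s} = {i\<in>I. i < a} \<union> (\<lambda>i. i + a) ` {i\<in>shift I a. i < s}"
    by (auto simp: shift_def image_iff)
      (metis add.commute add_less_cancel_left le_add_diff_inverse not_less)
  have "card {i\<in>I. i < a + s} = card {i\<in>I. i < a} + card ((\<lambda>i. i + a) ` {i\<in>shift I a. i < s})"
    unfolding split by (rule card_Un_disjoint) auto
  also have "card ((\<lambda>i. i + a) ` {i\<in>shift I a. i < s}) = card {i\<in>shift I a. i < s}"
    by (rule card_image) (auto simp: inj_on_def)
  finally show ?thesis .
qed

lemma deg_contr:
  "deg (contr t I) = card {i\<in>I. i < leaves t}"
  "sum_list (map leaves (contrs ts I)) = card {i\<in>I. i < sum_list (map leaves ts)}"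
proof (induction t I and ts I rule: contr_contrs.induct)
  case (1 ts I)
  show ?case
  proof (cases "ts = []")
    case True
    have "{i\<in>I. i < Suc 0} = (if 0 \<in> I then {0} else {})" by auto
    then show ?thesis using True by simp
  next
    case False
    then show ?thesis using 1 by (simp add: contr_Nd deg_tree_of_forest del: contr.simps)
  qed
next
  case (3 t ts I)
  then show ?case
    by (simp add: contrs_Cons_shift sum_leaves_list_of_opt card_less_add_split shift_def
        del: contrs.simps)
qed simp

lemma deg_contract: "deg (contract S I) = card {i\<in>I. i < deg S}"
  by (cases S) (auto simp: contract_def deg_contr)

lemma deg_contract_subset: "I \<subseteq> {..<deg S} \<Longrightarrow> deg (contract S I) = card I"
  unfolding deg_contract by (auto intro!: arg_cong[where f = card])

lemma rank_add_shift: "rank I (x + a) = rank (shift I a) x + card {i\<in>I. i < a}"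
  using card_less_add_split[of I a x] by (simp add: rank_def add.commute)

lemma shift_select_ranks:
  "shift (select_ranks I J) a = select_ranks (shift I a) (shift J (card {i\<in>I. i < a}))"
  by (auto simp: shift_def select_ranks_def rank_add_shift)

lemma contr_select_ranks:
  "contract (contr t I) J = contr t (select_ranks I J)"
  "contrs (contrs ts I) J = contrs ts (select_ranks I J)"
proof (induction t I and ts I arbitrary: J and J rule: contr_contrs.induct)
  case (1 ts I)
  show ?case
  proof (cases "ts = []")
    case True
    have "0 \<in> select_ranks I J \<longleftrightarrow> 0 \<in> I \<and> 0 \<in> J" by (simp add: select_ranks_def rank_def)
    then show ?thesis using True by (simp add: contract_def)
  next
    case False
    then show ?thesis using 1 by (simp add: contr_Nd contract_tree_of_forest del: contr.simps)
  qed
next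
  case (3 t ts I)
  then show ?case
    unfolding shift_def[symmetric]
    by (simp add: contrs_Cons_shift contrs_append contrs_list_of_opt sum_leaves_list_of_opt
        deg_contr shift_select_ranks del: contrs.simps)
qed simp

lemma contract_contract: "contract (contract S I) J = contract S (select_ranks I J)"
  by (cases S) (simp_all add: contract_def flip: contr_select_ranks(1))

lemma reduced_contr:
  "pred_option reduced (contr t I)"
  "list_all reduced (contrs ts I)"
proof (induction t I and ts I rule: contr_contrs.induct)
  case (1 ts I)
  then show ?case
    by (cases "contrs ts I" rule: tree_of_forest.cases) (auto simp: list_all_iff)
next
  case (3 t ts I)
  then show ?case by (auto split: option.split)
qed simp

lemma contract_in_PP: "contract S I \<in> PP"
proof (cases S)
  case (Some t)
  then show ?thesis
    using reduced_contr(1)[of t I] by (cases "contr t I") (auto simp: contract_def PP_def)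
qed (simp add: contract_def PP_def)

lemma rank_less_card: "finite I \<Longrightarrow> x \<in> I \<Longrightarrow> rank I x < card I"
  unfolding rank_def by (rule psubset_card_mono) auto

lemma strict_mono_on_rank: "finite I \<Longrightarrow> strict_mono_on I (rank I)"
  unfolding rank_def by (auto intro!: strict_mono_onI psubset_card_mono)

lemma bij_betw_rank:
  assumes "finite I"
  shows "bij_betw (rank I) I {..<card I}"
proof -
  have inj: "inj_on (rank I) I"
    by (rule strict_mono_on_imp_inj_on[OF strict_mono_on_rank[OF assms]])
  have "rank I ` I = {..<card I}"
    by (rule card_subset_eq) (use assms inj rank_less_card in \<open>auto simp: card_image\<close>)
  with inj show ?thesis by (simp add: bij_betw_def)
qed

lemma bij_betw_select_ranks:
  assumes "finite I"
  shows "bij_betw (select_ranks I) (Pow {..<card I}) (Pow I)"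
proof (rule bij_betw_byWitness[where f' = "image (rank I)"])
  have bij: "bij_betw (rank I) I {..<card I}" by (rule bij_betw_rank[OF assms])
  show "\<forall>J\<in>Pow {..<card I}. rank I ` select_ranks I J = J"
    using bij unfolding bij_betw_def select_ranks_def by (auto simp: image_iff)
  show "\<forall>K\<in>Pow I. select_ranks I (rank I ` K) = K"
    using bij by (auto simp: select_ranks_def bij_betw_def inj_on_def)
  show "image (rank I) ` Pow I \<subseteq> Pow {..<card I}"
    using bij by (auto simp: bij_betw_def)
qed (auto simp: select_ranks_def)

lemma leaves_pos: "0 < leaves t"
  by (induction t) (auto simp: neq_Nil_conv)

lemma length_le_sum_leaves: "length ts \<le> sum_list (map leaves ts)"
  by (induction ts) (simp_all add: Suc_le_eq add_strict_increasing leaves_pos)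

lemma leaves_child_less:
  assumes "x \<in> set ts" and "length ts \<noteq> 1"
  shows "leaves x < sum_list (map leaves ts)"
proof -
  have "remove1 x ts \<noteq> []" using assms by (cases ts) auto
  then obtain y ys where "remove1 x ts = y # ys" by (cases "remove1 x ts") auto
  then have "0 < sum_list (map leaves (remove1 x ts))" using leaves_pos[of y] by simp
  then show ?thesis using sum_list_map_remove1[OF assms(1), of leaves] by simp
qed

lemma finite_reduced_leaves_le: "finite {t. reduced t \<and> leaves t \<le> j}"
proof (induction j)
  case 0
  then show ?case by (simp add: leaves_pos[THEN gr_implies_not0])
next
  case (Suc j)
  let ?F = "{t. reduced t \<and> leaves t \<le> j}"
  have "{t. reduced t \<and> leaves t \<le> Suc j}
      \<subseteq> {Nd []} \<union> Nd ` {ts. set ts \<subseteq> ?F \<and> length ts \<le> Suc j}"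
  proof
    fix t assume t: "t \<in> {t. reduced t \<and> leaves t \<le> Suc j}"
    obtain ts where ts: "t = Nd ts" by (cases t)
    show "t \<in> {Nd []} \<union> Nd ` {ts. set ts \<subseteq> ?F \<and> length ts \<le> Suc j}"
    proof (cases "ts = []")
      case False
      then have sum: "sum_list (map leaves ts) \<le> Suc j" and "length ts \<noteq> 1"
        and "\<forall>x\<in>set ts. reduced x"
        using t ts by auto
      then have "set ts \<subseteq> ?F" using leaves_child_less by fastforce
      then show ?thesis using ts sum length_le_sum_leaves[of ts] by auto
    qed (simp add: ts)
  qed
  moreover have "finite ({Nd []} \<union> Nd ` {ts. set ts \<subseteq> ?F \<and> length ts \<le> Suc j})"
    using finite_lists_length_le[OF Suc.IH] by simp
  ultimately show ?case by (rule finite_subset)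
qed

lemma finite_PP_deg_le: "finite {U\<in>PP. deg U \<le> j}"
proof (rule finite_subset)
  show "{U\<in>PP. deg U \<le> j} \<subseteq> insert None (Some ` {t. reduced t \<and> leaves t \<le> j})"
    by (auto simp: PP_def)
qed (simp add: finite_reduced_leaves_le)

lemma finite_PP_deg_eq: "finite {U\<in>PP. deg U = j}"
  by (rule finite_subset[OF _ finite_PP_deg_le[of j]]) auto

lemma card_supersets:
  assumes "finite A" and "K \<subseteq> A"
  shows "card {I. I \<subseteq> A \<and> card I = card K + k \<and> K \<subseteq> I} = (card A - card K) choose k"
proof -
  have fin: "finite X" if "X \<subseteq> A" for X using assms(1) that finite_subset by blast
  have card_union: "card (D \<union> K) = card K + card D" if "D \<subseteq> A - K" for D
    using that assms(2) by (subst card_Un_disjoint) (auto intro: fin)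
  have "bij_betw (\<lambda>D. D \<union> K) {D. D \<subseteq> A - K \<and> card D = k}
      {I. I \<subseteq> A \<and> card I = card K + k \<and> K \<subseteq> I}"
  proof (rule bij_betw_byWitness[where f' = "\<lambda>I. I - K"])
    show "(\<lambda>D. D \<union> K) ` {D. D \<subseteq> A - K \<and> card D = k}
        \<subseteq> {I. I \<subseteq> A \<and> card I = card K + k \<and> K \<subseteq> I}"
      using assms(2) card_union by auto
    show "(\<lambda>I. I - K) ` {I. I \<subseteq> A \<and> card I = card K + k \<and> K \<subseteq> I}
        \<subseteq> {D. D \<subseteq> A - K \<and> card D = k}"
      using assms(2) fin by (auto simp: card_Diff_subset)
  qed auto
  then have "card {I. I \<subseteq> A \<and> card I = card K + k \<and> K \<subseteq> I}
      = card {D. D \<subseteq> A - K \<and> card D = k}"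
    by (simp add: bij_betw_same_card)
  also have "\<dots> = card (A - K) choose k" by (rule n_subsets) (simp add: assms(1))
  also have "card (A - K) = card A - card K" using assms fin by (simp add: card_Diff_subset)
  finally show ?thesis .
qed

lemma sum_card_filter_swap:
  assumes "finite A" and "finite B"
  shows "(\<Sum>a\<in>A. card {b\<in>B. R a b}) = (\<Sum>b\<in>B. card {a\<in>A. R a b})"
  using sum.swap[of "\<lambda>a b. if R a b then 1 else 0 :: nat" B A] assms
  by (simp add: sum.If_cases Int_def)

lemma pbinom_contract:
  assumes "I \<subseteq> {..<deg S}"
  shows "pbinom (contract S I) T = card {K \<in> Pow I. contract S K = T}"
proof -
  have "finite I" using assms finite_subset by blast
  have "pbinom (contract S I) T = card {J \<in> Pow {..<card I}. contract S (select_ranks I J) = T}"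
    by (simp add: pbinom_def deg_contract_subset[OF assms] contract_contract Pow_def)
  also have "\<dots> = card {K \<in> Pow I. contract S K = T}"
    by (rule bij_betw_same_card, rule bij_betw_Collect[OF bij_betw_select_ranks[OF \<open>finite I\<close>]])
      simp
  finally show ?thesis .
qed

lemma sum_pbinom_mult_eq_sum_contract:
  "(\<Sum>U\<in>{U\<in>PP. deg U = j}. pbinom S U * f U)
     = (\<Sum>I\<in>{I. I \<subseteq> {..<deg S} \<and> card I = j}. f (contract S I))"
proof -
  let ?B = "{I. I \<subseteq> {..<deg S} \<and> card I = j}"
  have pbinom_eq: "pbinom S U = card {I\<in>?B. contract S I = U}" if "deg U = j" for U
  proof -
    have "{I. I \<subseteq> {..<deg S} \<and> contract S I = U} = {I\<in>?B. contract S I = U}"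
      using that deg_contract_subset[of _ S] by auto
    then show ?thesis by (simp add: pbinom_def)
  qed
  have "(\<Sum>I\<in>?B. f (contract S I))
      = (\<Sum>U\<in>{U\<in>PP. deg U = j}. \<Sum>I\<in>{I\<in>?B. contract S I = U}. f (contract S I))"
    by (rule sum.group[symmetric])
      (auto simp: finite_PP_deg_eq contract_in_PP deg_contract_subset)
  also have "\<dots> = (\<Sum>U\<in>{U\<in>PP. deg U = j}. pbinom S U * f U)"
    by (rule sum.cong) (simp_all add: pbinom_eq)
  finally show ?thesis ..
qed

lemma sum_pbinom_mult_pbinom:
  "(\<Sum>U\<in>{U\<in>PP. deg U = deg T + k}. pbinom S U * pbinom U T)
     = pbinom S T * (deg S - deg T choose k)"
proof -
  let ?n = "deg S" and ?m = "deg T"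
  let ?B = "{I. I \<subseteq> {..<?n} \<and> card I = ?m + k}"
  let ?C = "{K. K \<subseteq> {..<?n} \<and> contract S K = T}"
  have "(\<Sum>U\<in>{U\<in>PP. deg U = ?m + k}. pbinom S U * pbinom U T) = (\<Sum>I\<in>?B. card {K\<in>?C. K \<subseteq> I})"
    unfolding sum_pbinom_mult_eq_sum_contract
    by (rule sum.cong) (auto simp: pbinom_contract intro!: arg_cong[where f = card])
  also have "\<dots> = (\<Sum>K\<in>?C. card {I\<in>?B. K \<subseteq> I})"
    by (rule sum_card_filter_swap) auto
  also have "\<dots> = (\<Sum>K\<in>?C. ?n - ?m choose k)"
  proof (rule sum.cong)
    fix K assume "K \<in> ?C"
    then have "K \<subseteq> {..<?n}" and "card K = ?m" by (auto simp flip: deg_contract_subset)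
    then show "card {I\<in>?B. K \<subseteq> I} = ?n - ?m choose k"
      using card_supersets[of "{..<?n}" K k] by (simp add: conj_assoc)
  qed simp
  also have "\<dots> = pbinom S T * (?n - ?m choose k)" by (simp add: pbinom_def)
  finally show ?thesis .
qed

lemma pbinom_eq_0_if_deg_less:
  assumes "deg U < deg T"
  shows "pbinom U T = 0"
proof -
  have "{J. J \<subseteq> {..<deg U} \<and> contract U J = T} = {}"
  proof (intro equals0I)
    fix J assume "J \<in> {J. J \<subseteq> {..<deg U} \<and> contract U J = T}"
    then have J: "J \<subseteq> {..<deg U}" and "contract U J = T" by auto
    then have "deg T = card J" by (simp flip: deg_contract_subset)
    also have "\<dots> \<le> deg U" using card_mono[OF finite_lessThan J] by simp
    finally show False using assms by simp
  qed
  then show ?thesis by (simp add: pbinom_def)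
qed

lemma sum_PP_deg_le_group:
  "(\<Sum>U\<in>{U\<in>PP. deg U \<le> n}. h U) = (\<Sum>j\<le>n. \<Sum>U\<in>{U\<in>PP. deg U = j}. h U)"
proof -
  have "(\<Sum>U\<in>{U\<in>PP. deg U \<le> n}. h U) = (\<Sum>j\<le>n. \<Sum>U\<in>{U\<in>{U\<in>PP. deg U \<le> n}. deg U = j}. h U)"
    by (rule sum.group[symmetric]) (auto simp: finite_PP_deg_le)
  also have "\<dots> = (\<Sum>j\<le>n. \<Sum>U\<in>{U\<in>PP. deg U = j}. h U)"
    by (rule sum.cong) (auto intro: sum.cong)
  finally show ?thesis .
qed

lemma sum_pbinom_mult_pbinom_powers:
  fixes a b :: "'a::comm_ring_1"
  shows "(\<Sum>U\<in>{U\<in>PP. deg U \<le> deg S}.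
            of_nat (pbinom S U * pbinom U T) * a ^ (deg S - deg U) * (b - a) ^ (deg U - deg T))
         = of_nat (pbinom S T) * b ^ (deg S - deg T)"
proof -
  let ?n = "deg S" and ?m = "deg T"
  define F where "F j = of_nat (\<Sum>U\<in>{U\<in>PP. deg U = j}. pbinom S U * pbinom U T)
    * a ^ (?n - j) * (b - a) ^ (j - ?m)" for j
  have F_below: "F j = 0" if "j < ?m" for j
    using that by (simp add: F_def pbinom_eq_0_if_deg_less)
  have F_above: "F (?m + k)
      = of_nat (pbinom S T) * (of_nat (?n - ?m choose k) * (b - a) ^ k * a ^ (?n - ?m - k))" for k
    unfolding F_def sum_pbinom_mult_pbinom by (simp add: algebra_simps)
  have "(\<Sum>U\<in>{U\<in>PP. deg U \<le> ?n}.
          of_nat (pbinom S U * pbinom U T) * a ^ (?n - deg U) * (b - a) ^ (deg U - ?m))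
      = (\<Sum>j\<le>?n. \<Sum>U\<in>{U\<in>PP. deg U = j}.
          of_nat (pbinom S U * pbinom U T) * a ^ (?n - deg U) * (b - a) ^ (deg U - ?m))"
    by (rule sum_PP_deg_le_group)
  also have "\<dots> = (\<Sum>j\<le>?n. F j)"
    by (auto simp: F_def of_nat_sum sum_distrib_right intro!: sum.cong)
  also have "\<dots> = of_nat (pbinom S T) * b ^ (?n - ?m)"
  proof (cases "?m \<le> ?n")
    case True
    have "(\<Sum>j\<le>?n. F j) = (\<Sum>j=?m..?n. F j)"
      by (rule sum.mono_neutral_right) (auto simp: F_below)
    also have "\<dots> = (\<Sum>k\<le>?n - ?m. F (?m + k))"
      by (simp add: sum.atLeastAtMost_shift_0[OF True] atLeast0AtMost comp_def)
    also have "\<dots> = of_nat (pbinom S T)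
        * (\<Sum>k\<le>?n - ?m. of_nat (?n - ?m choose k) * (b - a) ^ k * a ^ (?n - ?m - k))"
      by (simp add: F_above sum_distrib_left)
    also have "\<dots> = of_nat (pbinom S T) * b ^ (?n - ?m)"
      using binomial_ring[of "b - a" a "?n - ?m"] by simp
    finally show ?thesis .
  next
    case False
    then show ?thesis using F_below by (simp add: pbinom_eq_0_if_deg_less)
  qed
  finally show ?thesis .
qed

theorem mainTheorem3:
  fixes S T :: "ptree option"
  assumes "S \<in> PP" and "T \<in> PP"
  shows "(\<forall>k. deg T + k \<le> deg S \<longrightarrow>
           (\<Sum>U\<in>{U\<in>PP. deg U = deg T + k}. pbinom S U * pbinom U T)
             = pbinom S T * (deg S - deg T choose k))
       \<and> (\<forall>a b :: complex.
           (\<Sum>U\<in>{U\<in>PP. deg U \<le> deg S}.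
              of_nat (pbinom S U * pbinom U T) * a ^ (deg S - deg U) * (b - a) ^ (deg U - deg T))
             = of_nat (pbinom S T) * b ^ (deg S - deg T))"
  using sum_pbinom_mult_pbinom sum_pbinom_mult_pbinom_powers by blast

end
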